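(* For every node $v\in\mathcal V$ and observed histories $(y,\tilde M_y)$, $(z,\tilde M_z)$ with $\Pr(\mathbf M[y]=\tilde M_y)>0$, $\Pr(\mathbf M[z]=\tilde M_z)>0$ and $(y,\tilde M_y)\subset(z,\tilde M_z)$, we have $\Delta(v\mid y,\tilde M_y)\ge\Delta(v\mid z,\tilde M_z)$.
   Context: Model (multi-seeding with intermediary constraints). $\mathcal G=(\mathcal V,\mathcal E)$ is a finite directed graph; for an arc $e=(u,v)$, $u$ is called the head node of $e$ and influence can pass from $u$ to $v$. Each arc $e$ has an influence probability $\bar w(e)\in[0,1]$ and each node $v$ has a reward $\mathbf r(v)\ge 0$. A seeding sequence is a finite sequence $y=(v_1,\dots,v_t)$ of nodes (repetitions allowed), $|y|=t$; $a@b$ denotes concatenation; $y\subset z$ for sequences means $y$ is a prefix of $z$. A realization matrix is an array $M=(M(e,j))_{e\in\mathcal E,\,j\ge 1}$ with entries in $\{0,1\}$; $M(e,j)$ is the realization of arc $e$ the $j$-th time $e$ is observed. The random realization matrix $\mathbf M$ has independent entries $\mathbf M(e,j)\sim\mathrm{Bernoulli}(\bar w(e))$. Given $y=(v_1,\dots,v_t)$ and $M$, rounds $\tau=1,\dots,t$ are run on graphs $\mathcal G_\tau=(\mathcal V,\mathcal E_\tau)$, $\mathcal E_1=\mathcal E$: in round $\tau$ the seed $v_\tau$ is activated and an independent-cascade diffusion runs on $\mathcal G_\tau$: each node activated in round $\tau$ observes each of its outgoing arcs $e\in\mathcal E_\tau$ once in that round; if $e$ was observed $k$ times before, its realization is $M(e,k+1)$;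 if it equals $1$, the other endpoint of $e$ becomes activated in round $\tau$. After round $\tau$, for every node activated in round $\tau$ other than $v_\tau$ (an intermediary), all arcs pointing into that node are removed, giving $\mathcal E_{\tau+1}$. The partial matrix $M[y]$ agrees with $M$ on the entries observed during this process and equals "?" elsewhere. The objective $f(y,M)=\sum_{v\in S}\mathbf r(v)$, where $S$ is the set of nodes $v$ with $v\in y$ or with some arc $(u,v)$ having an observed entry equal to $1$; $f(y,M)$ depends only on $(y,M[y])$ and is also written $f(y,\tilde M_y)$. An observed history is a pair $(y,\tilde M_y)$ where $\tilde M_y$ is a possible value of $\mathbf M[y]$. Sub-history: $(y,\tilde M_y)\subset(z,\tilde M_z)$ means $y\subset z$ and there exists a realization matrix $M$ with $M[y]=\tilde M_y$ and $M[z]=\tilde M_z$. The expected marginal gain is $\Delta(v\mid y,\tilde M_y)=\mathbb E[f(y@(v),\mathbf M)\mid \mathbf M[y]=\tilde M_y]-f(y,\tilde M_y)$. *)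

theory Defs
  imports "HOL-Probability.Probability" "HOL-Library.Sublist"
begin

text \<open>Nodes are the elements of a finite type 'v (so the node set V is UNIV). A realization matrix is a function
M :: (arc \<times> nat) \<Rightarrow> bool; entry (e,j) for j \<ge> 1 is the j-th realization of e
(entry index 0 is never used). A partial matrix uses None for "?".\<close>

type_synonym 'v realization = "('v \<times> 'v) \<times> nat \<Rightarrow> bool"
type_synonym 'v partial_realization = "('v \<times> 'v) \<times> nat \<Rightarrow> bool option"

text \<open>State between rounds: current arc set E_tau and the number of times each arc
has been observed so far.\<close>

definition live_arcs :: "('v \<times> 'v) set \<Rightarrow> ('v \<times> 'v \<Rightarrow> nat) \<Rightarrow> 'v realization \<Rightarrow> ('v \<times> 'v) set" where
  "live_arcs Ec cnt M = {e \<in> Ec. M (e, Suc (cnt e))}"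

text \<open>Nodes activated in a round seeded at s: reachable from s via arcs whose next
realization is 1 (each activated node observes each outgoing arc once).\<close>
definition round_activated :: "('v \<times> 'v) set \<Rightarrow> ('v \<times> 'v \<Rightarrow> nat) \<Rightarrow> 'v realization \<Rightarrow> 'v \<Rightarrow> 'v set" where
  "round_activated Ec cnt M s = {x. (s, x) \<in> (live_arcs Ec cnt M)\<^sup>*}"

definition round_step :: "'v realization \<Rightarrow> ('v \<times> 'v) set \<times> ('v \<times> 'v \<Rightarrow> nat) \<Rightarrow> 'v
    \<Rightarrow> ('v \<times> 'v) set \<times> ('v \<times> 'v \<Rightarrow> nat)" where
  "round_step M st s =
     (let Ec = fst st; cnt = snd st; A = round_activated Ec cnt M s in
       ({e \<in> Ec. snd e \<notin> A - {s}},
        (\<lambda>e. if e \<in> Ec \<and> fst e \<in> A then Suc (cnt e) else cnt e)))"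

definition run_rounds :: "('v \<times> 'v) set \<Rightarrow> 'v list \<Rightarrow> 'v realization
    \<Rightarrow> ('v \<times> 'v) set \<times> ('v \<times> 'v \<Rightarrow> nat)" where
  "run_rounds E y M = fold (\<lambda>s st. round_step M st s) y (E, (\<lambda>_. 0))"

definition partial_matrix :: "('v \<times> 'v) set \<Rightarrow> 'v list \<Rightarrow> 'v realization \<Rightarrow> 'v partial_realization" where
  "partial_matrix E y M =
     (\<lambda>(e, j). if 1 \<le> j \<and> j \<le> snd (run_rounds E y M) e then Some (M (e, j)) else None)"

definition f_hist :: "('v::finite \<Rightarrow> real) \<Rightarrow> 'v list \<Rightarrow> 'v partial_realization \<Rightarrow> real" where
  "f_hist r y Mt = sum r (set y \<union> {x. \<exists>u j. Mt ((u, x), j) = Some True})"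

definition f_obj :: "('v \<times> 'v) set \<Rightarrow> ('v::finite \<Rightarrow> real) \<Rightarrow> 'v list \<Rightarrow> 'v realization \<Rightarrow> real" where
  "f_obj E r y M = f_hist r y (partial_matrix E y M)"

definition real_measure :: "('v \<times> 'v) set \<Rightarrow> ('v \<times> 'v \<Rightarrow> real) \<Rightarrow> 'v realization measure" where
  "real_measure E w =
     (\<Pi>\<^sub>M ej\<in>UNIV. measure_pmf (bernoulli_pmf (if fst ej \<in> E then w (fst ej) else 0)))"

definition hist_event :: "('v \<times> 'v) set \<Rightarrow> ('v \<times> 'v \<Rightarrow> real) \<Rightarrow> 'v list \<Rightarrow> 'v partial_realization
    \<Rightarrow> 'v realization set" where
  "hist_event E w y Mt = {M \<in> space (real_measure E w). partial_matrix E y M = Mt}"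

definition hist_prob :: "('v \<times> 'v) set \<Rightarrow> ('v \<times> 'v \<Rightarrow> real) \<Rightarrow> 'v list \<Rightarrow> 'v partial_realization \<Rightarrow> real" where
  "hist_prob E w y Mt = measure (real_measure E w) (hist_event E w y Mt)"

definition cond_expect :: "'a measure \<Rightarrow> ('a \<Rightarrow> real) \<Rightarrow> 'a set \<Rightarrow> real" where
  "cond_expect P X A = (\<integral>x. X x * indicator A x \<partial>P) / measure P A"

definition marginal_gain :: "('v \<times> 'v) set \<Rightarrow> ('v \<times> 'v \<Rightarrow> real) \<Rightarrow> ('v::finite \<Rightarrow> real)
    \<Rightarrow> 'v \<Rightarrow> 'v list \<Rightarrow> 'v partial_realization \<Rightarrow> real" where
  "marginal_gain E w r v y Mt =
     cond_expect (real_measure E w) (\<lambda>M. f_obj E r (y @ [v]) M) (hist_event E w y Mt)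
     - f_hist r y Mt"

definition sub_history :: "('v \<times> 'v) set \<Rightarrow> 'v list \<times> 'v partial_realization
    \<Rightarrow> 'v list \<times> 'v partial_realization \<Rightarrow> bool" where
  "sub_history E h1 h2 \<longleftrightarrow> prefix (fst h1) (fst h2) \<and>
     (\<exists>M. partial_matrix E (fst h1) M = snd h1 \<and> partial_matrix E (fst h2) M = snd h2)"

end

theory Submission
  imports Defs
begin

text \<open>Conditioned on an observed history, the round seeded at v reads, for every surviving
arc, only the next still unobserved entry of its row. These entries are independent of the
observed ones and distributed like the first column of the realization matrix, so the
expected marginal gain is the expected reward of the not yet covered nodes reachable from v
through the surviving arcs that are live in the first column. Extending the history can only
remove arcs and enlarge the covered set, so this reward decreases pointwise.\<close>

section \<open>The diffusion process\<close>

lemma round_step_eq: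
  "round_step M (Ec, c) s =
    ({e\<in>Ec. snd e \<notin> round_activated Ec c M s - {s}},
     (\<lambda>e. if e \<in> Ec \<and> fst e \<in> round_activated Ec c M s then Suc (c e) else c e))"
  by (simp add: round_step_def Let_def)

lemma run_rounds_snoc: "run_rounds E (y @ [s]) M = round_step M (run_rounds E y M) s"
  by (simp add: run_rounds_def)

lemma run_rounds_append_mono:
  "fst (run_rounds E (y @ t) M) \<subseteq> fst (run_rounds E y M) \<and>
   (\<forall>e. snd (run_rounds E y M) e \<le> snd (run_rounds E (y @ t) M) e)"
proof (induction t rule: rev_induct)
  case Nil
  show ?case by simp
next
  case (snoc s t)
  obtain Ec c where st: "run_rounds E (y @ t) M = (Ec, c)" by fastforce
  have "run_rounds E (y @ t @ [s]) M = round_step M (Ec, c) s"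
    by (simp flip: append_assoc add: run_rounds_snoc st)
  with snoc.IH st show ?case
    by (auto simp: round_step_eq intro: le_SucI order_trans)
qed

lemma round_activated_cong:
  assumes "\<And>e. e \<in> Ec \<Longrightarrow> fst e \<in> round_activated Ec c M s \<Longrightarrow> M' (e, Suc (c e)) = M (e, Suc (c e))"
  shows "round_activated Ec c M' s = round_activated Ec c M s"
proof -
  have "(s, x) \<in> (live_arcs Ec c M)\<^sup>* \<longleftrightarrow> (s, x) \<in> (live_arcs Ec c M')\<^sup>*" for x
  proof
    show "(s, x) \<in> (live_arcs Ec c M')\<^sup>*" if "(s, x) \<in> (live_arcs Ec c M)\<^sup>*"
      using that
    proof (induction rule: rtrancl_induct)
      case (step a b)
      then have "a \<in> round_activated Ec c M s" by (simp add: round_activated_def)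
      with step assms have "(a, b) \<in> live_arcs Ec c M'" by (auto simp: live_arcs_def)
      with step.IH show ?case by (rule rtrancl_into_rtrancl)
    qed simp
    show "(s, x) \<in> (live_arcs Ec c M)\<^sup>*" if "(s, x) \<in> (live_arcs Ec c M')\<^sup>*"
      using that
    proof (induction rule: rtrancl_induct)
      case (step a b)
      then have "a \<in> round_activated Ec c M s" by (simp add: round_activated_def)
      with step assms have "(a, b) \<in> live_arcs Ec c M" by (auto simp: live_arcs_def)
      with step.IH show ?case by (rule rtrancl_into_rtrancl)
    qed simp
  qed
  then show ?thesis by (auto simp: round_activated_def)
qed

lemma run_rounds_cong:
  assumes "\<And>e j. 1 \<le> j \<Longrightarrow> j \<le> snd (run_rounds E y M) e \<Longrightarrow> M' (e, j) = M (e, j)"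
  shows "run_rounds E y M' = run_rounds E y M"
  using assms
proof (induction y rule: rev_induct)
  case Nil
  show ?case by (simp add: run_rounds_def)
next
  case (snoc s y)
  obtain Ec c where st: "run_rounds E y M = (Ec, c)" by fastforce
  let ?A = "round_activated Ec c M s"
  have cnt: "snd (run_rounds E (y @ [s]) M) e = (if e \<in> Ec \<and> fst e \<in> ?A then Suc (c e) else c e)" for e
    by (simp add: run_rounds_snoc st round_step_eq)
  have "run_rounds E y M' = run_rounds E y M"
    using snoc.prems cnt by (intro snoc.IH) (fastforce simp: st intro: le_SucI)
  then have st': "run_rounds E y M' = (Ec, c)" by (simp add: st)
  have "round_activated Ec c M' s = ?A"
    using snoc.prems cnt by (intro round_activated_cong) auto
  then show ?case by (simp add: run_rounds_snoc st st' round_step_eq)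
qed

lemma partial_matrix_eq_iff:
  "partial_matrix E y M' = partial_matrix E y M \<longleftrightarrow>
   (\<forall>e j. 1 \<le> j \<and> j \<le> snd (run_rounds E y M) e \<longrightarrow> M' (e, j) = M (e, j))"
proof
  assume eq: "partial_matrix E y M' = partial_matrix E y M"
  show "\<forall>e j. 1 \<le> j \<and> j \<le> snd (run_rounds E y M) e \<longrightarrow> M' (e, j) = M (e, j)"
  proof (intro allI impI)
    fix e j assume "1 \<le> j \<and> j \<le> snd (run_rounds E y M) e"
    with fun_cong[OF eq, of "(e, j)"] show "M' (e, j) = M (e, j)"
      by (auto simp: partial_matrix_def split: if_splits)
  qed
next
  assume obs: "\<forall>e j. 1 \<le> j \<and> j \<le> snd (run_rounds E y M) e \<longrightarrow> M' (e, j) = M (e, j)"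
  then have "run_rounds E y M' = run_rounds E y M" by (intro run_rounds_cong) blast
  with obs show "partial_matrix E y M' = partial_matrix E y M"
    by (auto simp: partial_matrix_def fun_eq_iff)
qed

definition covered_nodes :: "'v list \<Rightarrow> 'v partial_realization \<Rightarrow> 'v set" where
  "covered_nodes y Mt = set y \<union> {x. \<exists>u j. Mt ((u, x), j) = Some True}"

lemma f_hist_eq: "f_hist r y Mt = sum r (covered_nodes y Mt)"
  by (simp add: f_hist_def covered_nodes_def)

lemma covered_nodes_partial_matrix:
  "covered_nodes y (partial_matrix E y M) =
     set y \<union> {x. \<exists>u j. 1 \<le> j \<and> j \<le> snd (run_rounds E y M) (u, x) \<and> M ((u, x), j)}"
  by (auto simp: covered_nodes_def partial_matrix_def split: if_splits)

lemma covered_nodes_append_mono: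
  "covered_nodes y (partial_matrix E y M) \<subseteq> covered_nodes (y @ t) (partial_matrix E (y @ t) M)"
proof -
  have "snd (run_rounds E y M) e \<le> snd (run_rounds E (y @ t) M) e" for e
    using run_rounds_append_mono[of E y t M] by blast
  then show ?thesis
    unfolding covered_nodes_partial_matrix set_append by (blast intro: le_trans)
qed

lemma round_activated_unfold:
  "round_activated Ec c M s =
     insert s {x. \<exists>u \<in> round_activated Ec c M s. (u, x) \<in> live_arcs Ec c M}"
  unfolding round_activated_def
proof (rule set_eqI, rule iffI)
  fix x assume "x \<in> {x. (s, x) \<in> (live_arcs Ec c M)\<^sup>*}"
  then have "(s, x) \<in> (live_arcs Ec c M)\<^sup>*" by simp
  then show "x \<in> insert s {x. \<exists>u \<in> {x. (s, x) \<in> (live_arcs Ec c M)\<^sup>*}. (u, x) \<in> live_arcs Ec c M}"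
    by (cases rule: rtranclE) auto
qed (auto intro: rtrancl_into_rtrancl)

lemma covered_nodes_snoc:
  assumes st: "run_rounds E y M = (Ec, c)"
  shows "covered_nodes (y @ [v]) (partial_matrix E (y @ [v]) M) =
         covered_nodes y (partial_matrix E y M) \<union> round_activated Ec c M v"
proof -
  let ?A = "round_activated Ec c M v"
  have cnt: "j \<le> snd (run_rounds E (y @ [v]) M) (u, x) \<longleftrightarrow>
      j \<le> c (u, x) \<or> (u, x) \<in> Ec \<and> u \<in> ?A \<and> j = Suc (c (u, x))" for u x j
    by (auto simp: run_rounds_snoc st round_step_eq le_Suc_eq)
  have "{x. \<exists>u j. 1 \<le> j \<and> j \<le> snd (run_rounds E (y @ [v]) M) (u, x) \<and> M ((u, x), j)} =
        {x. \<exists>u j. 1 \<le> j \<and> j \<le> c (u, x) \<and> M ((u, x), j)} \<union>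
        {x. \<exists>u \<in> ?A. (u, x) \<in> live_arcs Ec c M}"
    unfolding cnt by (auto simp: live_arcs_def)
  then have "covered_nodes (y @ [v]) (partial_matrix E (y @ [v]) M) =
      covered_nodes y (partial_matrix E y M) \<union> insert v {x. \<exists>u \<in> ?A. (u, x) \<in> live_arcs Ec c M}"
    by (auto simp: covered_nodes_partial_matrix st)
  then show ?thesis
    by (simp only: round_activated_unfold[symmetric])
qed

lemma f_obj_snoc:
  assumes "run_rounds E y M = (Ec, c)"
  shows "f_obj E r (y @ [v]) M = f_hist r y (partial_matrix E y M)
     + sum r (round_activated Ec c M v - covered_nodes y (partial_matrix E y M))"
proof -
  let ?S = "covered_nodes y (partial_matrix E y M)"
  have "f_obj E r (y @ [v]) M = sum r (?S \<union> (round_activated Ec c M v - ?S))"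
    by (simp add: f_obj_def f_hist_eq covered_nodes_snoc[OF assms] Un_Diff_cancel)
  also have "\<dots> = sum r ?S + sum r (round_activated Ec c M v - ?S)"
    by (rule sum.union_disjoint) auto
  finally show ?thesis by (simp add: f_hist_eq)
qed

section \<open>The random realization matrix\<close>

definition entry_law :: "('v \<times> 'v) set \<Rightarrow> ('v \<times> 'v \<Rightarrow> real) \<Rightarrow> ('v \<times> 'v) \<times> nat \<Rightarrow> bool measure" where
  "entry_law E w ej = measure_pmf (bernoulli_pmf (if fst ej \<in> E then w (fst ej) else 0))"

lemma real_measure_eq_PiM: "real_measure E w = PiM UNIV (entry_law E w)"
  unfolding real_measure_def entry_law_def[abs_def] by (rule refl)

lemma space_entry_law [simp]: "space (entry_law E w ej) = UNIV"
  by (simp add: entry_law_def)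

lemma space_real_measure [simp]: "space (real_measure E w) = UNIV"
  by (simp add: real_measure_eq_PiM space_PiM)

lemma prob_space_entry_law: "prob_space (entry_law E w ej)"
  by (simp add: entry_law_def prob_space_measure_pmf)

lemma prob_space_real_measure: "prob_space (real_measure E w)"
  unfolding real_measure_eq_PiM by (rule prob_space_PiM) (rule prob_space_entry_law)

lemma sets_PiM_entry_law_finite:
  assumes "finite J"
  shows "sets (PiM J (entry_law E w)) = sets (count_space (PiE J (\<lambda>_. UNIV)))"
proof -
  have "sets (PiM J (entry_law E w)) = sets (PiM J (\<lambda>_. count_space (UNIV :: bool set)))"
    by (rule sets_PiM_cong) (simp_all add: entry_law_def)
  also have "PiM J (\<lambda>_. count_space (UNIV :: bool set)) = count_space (PiE J (\<lambda>_. UNIV))"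
    using assms by (rule count_space_PiM_finite) simp
  finally show ?thesis .
qed

lemma borel_measurable_finite_coordinates:
  assumes "finite J"
  shows "(\<lambda>\<omega>. g (restrict \<omega> J)) \<in> borel_measurable (real_measure E w)"
proof -
  have "(\<lambda>\<omega>. restrict \<omega> J) \<in> measurable (real_measure E w) (PiM J (entry_law E w))"
    unfolding real_measure_eq_PiM by (rule measurable_restrict_subset) simp
  moreover have "g \<in> borel_measurable (PiM J (entry_law E w))"
    by (simp add: measurable_cong_sets[OF sets_PiM_entry_law_finite[OF assms] refl])
  ultimately show ?thesis by (rule measurable_compose)
qed

lemma integrable_finite_coordinates:
  fixes g :: "_ \<Rightarrow> real"
  assumes "finite J" "\<And>x. \<bar>g x\<bar> \<le> B"
  shows "integrable (real_measure E w) (\<lambda>\<omega>. g (restrict \<omega> J))"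
proof -
  interpret prob_space "real_measure E w" by (rule prob_space_real_measure)
  show ?thesis
    using assms borel_measurable_finite_coordinates by (intro integrable_const_bound[where B = B]) auto
qed

lemma indep_vars_entries:
  "prob_space.indep_vars (real_measure E w) (entry_law E w) (\<lambda>i \<omega>. \<omega> i) UNIV"
proof -
  interpret prob_space "real_measure E w" by (rule prob_space_real_measure)
  have rv: "random_variable (entry_law E w i) (\<lambda>\<omega>. \<omega> i)" for i
    unfolding real_measure_eq_PiM by (rule measurable_component_singleton) simp
  have "distr (real_measure E w) (entry_law E w i) (\<lambda>\<omega>. \<omega> i) = entry_law E w i" for i
    unfolding real_measure_eq_PiM by (rule distr_PiM_component) (auto intro: prob_space_entry_law)
  then show ?thesis
    using rv by (subst indep_vars_iff_distr_eq_PiM) (auto simp: real_measure_eq_PiM restrict_UNIV)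
qed

lemma integral_disjoint_coordinates_mult:
  fixes g h :: "_ \<Rightarrow> real"
  assumes fin: "finite J" "finite D" and disj: "J \<inter> D = {}"
    and bounded: "\<And>x. \<bar>g x\<bar> \<le> Bg" "\<And>x. \<bar>h x\<bar> \<le> Bh"
  shows "(\<integral>\<omega>. g (restrict \<omega> J) * h (restrict \<omega> D) \<partial>real_measure E w) =
         (\<integral>\<omega>. g (restrict \<omega> J) \<partial>real_measure E w) * (\<integral>\<omega>. h (restrict \<omega> D) \<partial>real_measure E w)"
proof -
  interpret prob_space "real_measure E w" by (rule prob_space_real_measure)
  have "indep_var (PiM J (entry_law E w)) (\<lambda>\<omega>. restrict \<omega> J) (PiM D (entry_law E w)) (\<lambda>\<omega>. restrict \<omega> D)"
    using indep_var_restrict[OF indep_vars_entries disj] by simp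
  then have "indep_var borel (g \<circ> (\<lambda>\<omega>. restrict \<omega> J)) borel (h \<circ> (\<lambda>\<omega>. restrict \<omega> D))"
    by (rule indep_var_compose)
       (simp_all add: measurable_cong_sets[OF sets_PiM_entry_law_finite[OF fin(1)] refl]
                      measurable_cong_sets[OF sets_PiM_entry_law_finite[OF fin(2)] refl])
  then show ?thesis
    unfolding comp_def
    by (rule indep_var_lebesgue_integral)
       (use fin bounded integrable_finite_coordinates in blast)+
qed

lemma integral_real_measure_reindex:
  fixes f :: "_ \<Rightarrow> real"
  assumes "bij \<pi>" and row: "\<And>i. fst (\<pi> i) = fst i"
    and f: "f \<in> borel_measurable (real_measure E w)"
  shows "(\<integral>\<omega>. f (\<omega> \<circ> \<pi>) \<partial>real_measure E w) = (\<integral>\<omega>. f \<omega> \<partial>real_measure E w)"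
proof -
  let ?P = "real_measure E w"
  have law: "(\<lambda>i. entry_law E w (\<pi> i)) = entry_law E w"
    by (simp add: fun_eq_iff entry_law_def row)
  have "(\<lambda>\<omega>. \<lambda>i\<in>UNIV. \<omega> (\<pi> i)) \<in> measurable ?P (PiM UNIV (\<lambda>i. entry_law E w (\<pi> i)))"
    unfolding real_measure_eq_PiM by (rule measurable_restrict) (rule measurable_component_singleton, simp)
  then have meas: "(\<lambda>\<omega>. \<omega> \<circ> \<pi>) \<in> measurable ?P ?P"
    by (simp add: law restrict_UNIV comp_def real_measure_eq_PiM)
  have "distr ?P (PiM UNIV (\<lambda>i. entry_law E w (\<pi> i))) (\<lambda>\<omega>. \<lambda>i\<in>UNIV. \<omega> (\<pi> i)) =
      PiM UNIV (\<lambda>i. entry_law E w (\<pi> i))"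
    unfolding real_measure_eq_PiM
    by (rule distr_PiM_reindex) (simp_all add: prob_space_entry_law bij_is_inj[OF assms(1)])
  then have "distr ?P ?P (\<lambda>\<omega>. \<omega> \<circ> \<pi>) = ?P"
    by (simp add: law restrict_UNIV comp_def real_measure_eq_PiM)
  then show ?thesis
    using integral_distr[OF meas f] by simp
qed

definition swap_entry :: "('a \<Rightarrow> nat) \<Rightarrow> 'a \<times> nat \<Rightarrow> 'a \<times> nat" where
  "swap_entry k = (\<lambda>(e, j). (e, if j = k e then 1 else if j = 1 then k e else j))"

lemma swap_entry_involution: "swap_entry k (swap_entry k i) = i"
  by (cases i) (simp add: swap_entry_def)

lemma integral_real_measure_column:
  fixes F :: "('v::finite \<times> 'v \<Rightarrow> bool) \<Rightarrow> real"
  shows "(\<integral>\<omega>. F (\<lambda>e. \<omega> (e, k e)) \<partial>real_measure E w) = (\<integral>\<omega>. F (\<lambda>e. \<omega> (e, 1)) \<partial>real_measure E w)"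
proof -
  let ?J = "range (\<lambda>e. (e, 1::nat))"
  have "(\<lambda>\<omega>. (\<lambda>x. F (\<lambda>e. x (e, 1))) (restrict \<omega> ?J)) \<in> borel_measurable (real_measure E w)"
    by (rule borel_measurable_finite_coordinates) simp
  then have meas: "(\<lambda>\<omega>. F (\<lambda>e. \<omega> (e, 1))) \<in> borel_measurable (real_measure E w)"
    by simp
  have "bij (swap_entry k)"
    by (rule o_bij[of "swap_entry k"]) (simp_all add: fun_eq_iff swap_entry_involution)
  moreover have "fst (swap_entry k i) = fst i" for i
    by (cases i) (simp add: swap_entry_def)
  ultimately have "(\<integral>\<omega>. F (\<lambda>e. (\<omega> \<circ> swap_entry k) (e, 1)) \<partial>real_measure E w) =
      (\<integral>\<omega>. F (\<lambda>e. \<omega> (e, 1)) \<partial>real_measure E w)"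
    using integral_real_measure_reindex[OF _ _ meas] by blast
  moreover have "(\<lambda>e. (\<omega> \<circ> swap_entry k) (e, 1)) = (\<lambda>e. \<omega> (e, k e))" for \<omega> :: "'v realization"
    by (auto simp: swap_entry_def fun_eq_iff)
  ultimately show ?thesis by simp
qed

lemma cond_expect_cong:
  assumes "\<And>\<omega>. \<omega> \<in> A \<Longrightarrow> X \<omega> = Y \<omega>"
  shows "cond_expect P X A = cond_expect P Y A"
  unfolding cond_expect_def using assms
  by (auto intro!: Bochner_Integration.integral_cong simp: indicator_def)

lemma cond_expect_add_independent:
  fixes g :: "_ \<Rightarrow> real"
  assumes fin: "finite J" "finite D" and disj: "J \<inter> D = {}" and bounded: "\<And>x. \<bar>g x\<bar> \<le> B"
    and H: "H = {\<omega>. restrict \<omega> D \<in> A}" and pos: "measure (real_measure E w) H \<noteq> 0"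
  shows "cond_expect (real_measure E w) (\<lambda>\<omega>. a + g (restrict \<omega> J)) H =
         a + (\<integral>\<omega>. g (restrict \<omega> J) \<partial>real_measure E w)"
proof -
  let ?P = "real_measure E w"
  interpret prob_space ?P by (rule prob_space_real_measure)
  have ind: "indicator H = (\<lambda>\<omega>. indicator A (restrict \<omega> D) :: real)"
    by (simp add: H fun_eq_iff indicator_def)
  have "(indicator H :: _ \<Rightarrow> real) \<in> borel_measurable ?P"
    unfolding ind using fin(2) by (rule borel_measurable_finite_coordinates)
  then have "H \<in> sets ?P"
    by (simp add: borel_measurable_indicator_iff)
  then have int_ind: "(\<integral>\<omega>. indicator A (restrict \<omega> D) \<partial>?P) = measure ?P H"
    by (simp flip: ind)
  have int_g: "integrable ?P (\<lambda>\<omega>. g (restrict \<omega> J))"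
    using fin(1) bounded by (rule integrable_finite_coordinates)
  have int_h: "integrable ?P (\<lambda>\<omega>. indicator A (restrict \<omega> D) :: real)"
    using fin(2) by (rule integrable_finite_coordinates[where B = 1]) (simp add: indicator_def)
  have int_gh: "integrable ?P (\<lambda>\<omega>. g (restrict \<omega> J) * indicator A (restrict \<omega> D))"
    using integrable_real_mult_indicator[OF \<open>H \<in> sets ?P\<close> int_g] by (simp add: ind)
  have "(\<integral>\<omega>. (a + g (restrict \<omega> J)) * indicator H \<omega> \<partial>?P) =
      (\<integral>\<omega>. a * indicator A (restrict \<omega> D) + g (restrict \<omega> J) * indicator A (restrict \<omega> D) \<partial>?P)"
    by (simp add: ind distrib_right)
  also have "\<dots> = a * measure ?P H + (\<integral>\<omega>. g (restrict \<omega> J) * indicator A (restrict \<omega> D) \<partial>?P)"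
    using int_h int_gh by (subst Bochner_Integration.integral_add) (simp_all add: int_ind)
  also have "(\<integral>\<omega>. g (restrict \<omega> J) * indicator A (restrict \<omega> D) \<partial>?P) =
      (\<integral>\<omega>. g (restrict \<omega> J) \<partial>?P) * measure ?P H"
    using integral_disjoint_coordinates_mult[OF fin disj bounded, of "indicator A" 1 E w]
    by (simp add: int_ind)
  also have "a * measure ?P H + (\<integral>\<omega>. g (restrict \<omega> J) \<partial>?P) * measure ?P H =
      (a + (\<integral>\<omega>. g (restrict \<omega> J) \<partial>?P)) * measure ?P H"
    by (simp add: distrib_right)
  finally have "(\<integral>\<omega>. (a + g (restrict \<omega> J)) * indicator H \<omega> \<partial>?P) =
      (a + (\<integral>\<omega>. g (restrict \<omega> J) \<partial>?P)) * measure ?P H" .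
  then show ?thesis
    unfolding cond_expect_def using pos by simp
qed

section \<open>Marginal gains\<close>

definition fresh_reward :: "('v \<Rightarrow> real) \<Rightarrow> ('v \<times> 'v) set \<Rightarrow> 'v set \<Rightarrow> 'v \<Rightarrow> ('v \<times> 'v \<Rightarrow> bool) \<Rightarrow> real" where
  "fresh_reward r Ec S v L = sum r ({x. (v, x) \<in> {e \<in> Ec. L e}\<^sup>*} - S)"

lemma abs_fresh_reward_le:
  fixes r :: "'v::finite \<Rightarrow> real"
  shows "\<bar>fresh_reward r Ec S v L\<bar> \<le> (\<Sum>x\<in>UNIV. \<bar>r x\<bar>)"
  unfolding fresh_reward_def by (rule order_trans[OF sum_abs sum_mono2]) auto

lemma fresh_reward_antimono:
  fixes r :: "'v::finite \<Rightarrow> real"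
  assumes "\<forall>x. 0 \<le> r x" "Ec' \<subseteq> Ec" "S \<subseteq> S'"
  shows "fresh_reward r Ec' S' v L \<le> fresh_reward r Ec S v L"
proof -
  have "{e \<in> Ec'. L e}\<^sup>* \<subseteq> {e \<in> Ec. L e}\<^sup>*"
    using assms(2) by (intro rtrancl_mono) blast
  then show ?thesis
    unfolding fresh_reward_def using assms(1,3) by (intro sum_mono2) auto
qed

lemma integrable_fresh_reward_first_column:
  fixes r :: "'v::finite \<Rightarrow> real"
  shows "integrable (real_measure E w) (\<lambda>\<omega>. fresh_reward r Ec S v (\<lambda>e. \<omega> (e, 1)))"
proof -
  have "integrable (real_measure E w)
      (\<lambda>\<omega>. (\<lambda>x. fresh_reward r Ec S v (\<lambda>e. x (e, 1))) (restrict \<omega> (range (\<lambda>e. (e, 1::nat)))))"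
    by (rule integrable_finite_coordinates[where B = "\<Sum>x\<in>UNIV. \<bar>r x\<bar>"])
       (simp_all add: abs_fresh_reward_le)
  then show ?thesis by simp
qed

definition observed_entries :: "('a \<Rightarrow> nat) \<Rightarrow> ('a \<times> nat) set" where
  "observed_entries c = (SIGMA e:UNIV. {1..c e})"

lemma finite_observed_entries [simp]: "finite (observed_entries (c :: 'a::finite \<Rightarrow> nat))"
  by (simp add: observed_entries_def)

lemma hist_event_partial_matrix:
  "hist_event E w y (partial_matrix E y M) =
     {\<omega>. restrict \<omega> (observed_entries (snd (run_rounds E y M))) =
          restrict M (observed_entries (snd (run_rounds E y M)))}"
proof -
  let ?D = "observed_entries (snd (run_rounds E y M))"
  have in_event: "\<omega> \<in> hist_event E w y (partial_matrix E y M) \<longleftrightarrow>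
      (\<forall>e j. 1 \<le> j \<and> j \<le> snd (run_rounds E y M) e \<longrightarrow> \<omega> (e, j) = M (e, j))" for \<omega>
    by (simp add: hist_event_def partial_matrix_eq_iff)
  have agree: "(\<forall>e j. 1 \<le> j \<and> j \<le> snd (run_rounds E y M) e \<longrightarrow> \<omega> (e, j) = M (e, j)) \<longleftrightarrow>
      restrict \<omega> ?D = restrict M ?D" for \<omega>
    unfolding observed_entries_def restrict_def fun_eq_iff by force
  show ?thesis
    by (simp only: set_eq_iff in_event agree mem_Collect_eq simp_thms)
qed

lemma run_rounds_eq_if_partial_matrix_eq:
  assumes "partial_matrix E y M' = partial_matrix E y M"
  shows "run_rounds E y M' = run_rounds E y M"
proof (rule run_rounds_cong)
  fix e j assume "1 \<le> j" "j \<le> snd (run_rounds E y M) e"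
  with assms show "M' (e, j) = M (e, j)" unfolding partial_matrix_eq_iff by blast
qed

lemma round_activated_eq_fresh_reward:
  "sum r (round_activated Ec c M v - S) = fresh_reward r Ec S v (\<lambda>e. M (e, Suc (c e)))"
  by (simp add: round_activated_def live_arcs_def fresh_reward_def)

lemma marginal_gain_eq_integral_fresh_reward:
  fixes r :: "'v::finite \<Rightarrow> real"
  assumes pos: "hist_prob E w y (partial_matrix E y M) > 0"
  shows "marginal_gain E w r v y (partial_matrix E y M) =
    (\<integral>\<omega>. fresh_reward r (fst (run_rounds E y M)) (covered_nodes y (partial_matrix E y M)) v
          (\<lambda>e. \<omega> (e, 1)) \<partial>real_measure E w)"
proof -
  obtain Ec c where st: "run_rounds E y M = (Ec, c)" by fastforce
  let ?My = "partial_matrix E y M" and ?P = "real_measure E w"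
  let ?S = "covered_nodes y ?My" and ?H = "hist_event E w y ?My"
  define J where "J = range (\<lambda>e. (e, Suc (c e)))"
  define g where "g x = fresh_reward r Ec ?S v (\<lambda>e. x (e, Suc (c e)))" for x
  have disj: "J \<inter> observed_entries c = {}"
    by (auto simp: J_def observed_entries_def)
  have on_history: "f_obj E r (y @ [v]) \<omega> = f_hist r y ?My + g (restrict \<omega> J)" if "\<omega> \<in> ?H" for \<omega>
  proof -
    from that have "partial_matrix E y \<omega> = ?My" by (simp add: hist_event_def)
    moreover from run_rounds_eq_if_partial_matrix_eq[OF this] have "run_rounds E y \<omega> = (Ec, c)"
      by (simp add: st)
    ultimately show ?thesis
      by (simp add: f_obj_snoc round_activated_eq_fresh_reward g_def J_def)
  qed
  have "cond_expect ?P (f_obj E r (y @ [v])) ?H =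
      cond_expect ?P (\<lambda>\<omega>. f_hist r y ?My + g (restrict \<omega> J)) ?H"
    using on_history by (rule cond_expect_cong)
  then have "marginal_gain E w r v y ?My =
      cond_expect ?P (\<lambda>\<omega>. f_hist r y ?My + g (restrict \<omega> J)) ?H - f_hist r y ?My"
    by (simp only: marginal_gain_def)
  also have "\<dots> = (\<integral>\<omega>. g (restrict \<omega> J) \<partial>?P)"
    using pos hist_event_partial_matrix[of E w y M]
    by (subst cond_expect_add_independent[OF _ _ disj, where B = "\<Sum>x\<in>UNIV. \<bar>r x\<bar>"
        and A = "{restrict M (observed_entries c)}"])
       (simp_all add: J_def g_def abs_fresh_reward_le st hist_prob_def)
  also have "\<dots> = (\<integral>\<omega>. fresh_reward r Ec ?S v (\<lambda>e. \<omega> (e, 1)) \<partial>?P)"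
    using integral_real_measure_column[where F = "fresh_reward r Ec ?S v" and k = "\<lambda>e. Suc (c e)"]
    by (simp add: g_def J_def)
  finally show ?thesis by (simp add: st)
qed

theorem lemma2:
  fixes E :: "('v::finite \<times> 'v) set"
    and w :: "'v \<times> 'v \<Rightarrow> real"
    and r :: "'v \<Rightarrow> real"
    and v :: 'v
    and y z :: "'v list"
    and My Mz :: "'v partial_realization"
  assumes "\<forall>e\<in>E. 0 \<le> w e \<and> w e \<le> 1"
    and "\<forall>x. 0 \<le> r x"
    and "hist_prob E w y My > 0"
    and "hist_prob E w z Mz > 0"
    and "sub_history E (y, My) (z, Mz)"
  shows "marginal_gain E w r v y My \<ge> marginal_gain E w r v z Mz"
proof -
  from assms(5) obtain M t where z: "z = y @ t"
    and My: "My = partial_matrix E y M" and Mz: "Mz = partial_matrix E z M"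
    by (auto simp: sub_history_def prefix_def)
  let ?fresh = "\<lambda>x Mx \<omega>. fresh_reward r (fst (run_rounds E x M)) (covered_nodes x Mx) v (\<lambda>e. \<omega> (e, 1))"
  have "?fresh z Mz \<omega> \<le> ?fresh y My \<omega>" for \<omega> :: "'v realization"
    using run_rounds_append_mono[of E y t M] covered_nodes_append_mono[of y E M t]
    by (intro fresh_reward_antimono) (simp_all add: assms(2) My Mz z)
  then have "(\<integral>\<omega>. ?fresh z Mz \<omega> \<partial>real_measure E w) \<le> (\<integral>\<omega>. ?fresh y My \<omega> \<partial>real_measure E w)"
    by (intro integral_mono integrable_fresh_reward_first_column)
  then show ?thesis
    using assms(3,4) by (simp add: My Mz marginal_gain_eq_integral_fresh_reward)
qed

end
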